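(* Let $L$ be a finite lattice, $\varphi\in M_1(L)$, and $a_1,\dots,a_n\in L$ with $n\ge2$. If $a_n\le a_i$ for some $i\le n-1$, then $\Lambda_{a_1,\ldots,a_n}\varphi=\Lambda_{a_1,\ldots,a_{n-1}}\varphi$.
   Context: $L$ is a finite lattice with join $\vee$. $M_1(L)$ is the set of nonnegative monotone real functions on $L$. A path from $a$ to $b$ is a sequence $H=(h_0,\dots,h_m)$ of distinct elements of $L$ with $h_0=a$, $h_m=b$ ($m\ge0$); $\varphi(H)=\sum_{i=0}^m\varphi(h_i)-\sum_{i=1}^m\varphi(h_{i-1}\vee h_i)$; $\lambda(\varphi;a,b)=\max\{\varphi(H): H\text{ a path from }a\text{ to }b\}$. The $\lambda$-difference operator is $\Lambda_a\varphi(x)=\varphi(x)-\lambda(\varphi;a,x)$; it maps $M_1(L)$ into itself. Successive $\lambda$-differences are $\Lambda_{a_1,\ldots,a_n}\varphi=\Lambda_{a_n}(\Lambda_{a_1,\ldots,a_{n-1}}\varphi)$. *)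

theory Defs
  imports Main "HOL.Real"
begin

definition M1 :: "('a::{finite,lattice} \<Rightarrow> real) set" where
  "M1 = {\<phi>. (\<forall>x. 0 \<le> \<phi> x) \<and> mono \<phi>}"

definition paths :: "'a::{finite,lattice} \<Rightarrow> 'a \<Rightarrow> 'a list set" where
  "paths a b = {H. H \<noteq> [] \<and> distinct H \<and> hd H = a \<and> last H = b}"

definition path_val :: "('a::{finite,lattice} \<Rightarrow> real) \<Rightarrow> 'a list \<Rightarrow> real" where
  "path_val \<phi> H = sum_list (map \<phi> H) - sum_list (map (\<lambda>(x, y). \<phi> (sup x y)) (zip H (tl H)))"

definition lam :: "('a::{finite,lattice} \<Rightarrow> real) \<Rightarrow> 'a \<Rightarrow> 'a \<Rightarrow> real" where
  "lam \<phi> a b = Max (path_val \<phi> ` paths a b)"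

definition Lambda :: "'a::{finite,lattice} \<Rightarrow> ('a \<Rightarrow> real) \<Rightarrow> ('a \<Rightarrow> real)" where
  "Lambda a \<phi> = (\<lambda>x. \<phi> x - lam \<phi> a x)"

text \<open>Successive differences: Lambdas [a1,...,an] phi = Lambda an (... (Lambda a1 phi)).\<close>
definition Lambdas :: "'a::{finite,lattice} list \<Rightarrow> ('a \<Rightarrow> real) \<Rightarrow> ('a \<Rightarrow> real)" where
  "Lambdas as \<phi> = fold Lambda as \<phi>"

end

theory Submission
  imports Defs
begin

text \<open>For monotone \<open>\<phi>\<close>, cutting a closed loop out of a walk never lowers its value, so
  \<open>\<lambda>(\<phi>;a,x)\<close> bounds the value of every walk from \<open>a\<close> to \<open>x\<close>, repeated vertices allowed.
  Each step of a walk can only lower the value, whence \<open>\<lambda>(\<phi>;a,x) \<le> min (\<phi> a) (\<phi> x)\<close>;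
  the walk \<open>a, a \<sqinter> x, x\<close> gives \<open>\<lambda>(\<phi>;a,x) \<ge> \<phi> (a \<sqinter> x) \<ge> 0\<close>, and for \<open>x \<le> a\<close> the walk
  \<open>a, x\<close> gives \<open>\<lambda>(\<phi>;a,x) = \<phi> x\<close>. Consequently \<open>\<Lambda>\<^sub>a \<psi>\<close> vanishes below \<open>a\<close>, zeros of \<open>\<psi>\<close>
  survive all further \<open>\<lambda>\<close>-differences, and \<open>\<Lambda>\<^sub>c \<psi> = \<psi>\<close> as soon as \<open>\<psi> c = 0\<close>. If
  \<open>a\<^sub>n \<le> a\<^sub>i\<close>, the function obtained after the first \<open>n - 1\<close> differences thus vanishes at
  \<open>a\<^sub>n\<close>, and the last difference does nothing.\<close>

lemma path_val_singleton [simp]: "path_val \<phi> [x] = \<phi> x"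
  by (simp add: path_val_def)

lemma path_val_Cons_Cons: "path_val \<phi> (x # y # r) = path_val \<phi> (y # r) + \<phi> x - \<phi> (sup x y)"
  by (simp add: path_val_def)

lemma path_val_append_split:
  "path_val \<phi> (xs @ y # ys) = path_val \<phi> (xs @ [y]) + path_val \<phi> (y # ys) - \<phi> y"
proof (induction xs)
  case Nil
  then show ?case by simp
next
  case (Cons x xs)
  then show ?case by (cases xs) (auto simp: path_val_Cons_Cons)
qed

lemma path_val_le_last:
  assumes "mono \<phi>" and "H \<noteq> []"
  shows "path_val \<phi> H \<le> \<phi> (last H)"
  using assms(2)
proof (induction H rule: induct_list012)
  case (3 x y r)
  have "\<phi> x \<le> \<phi> (sup x y)" using \<open>mono \<phi>\<close> by (simp add: monoD)
  with 3 show ?case by (simp add: path_val_Cons_Cons)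
qed simp_all

lemma path_val_le_hd:
  assumes "mono \<phi>" and "H \<noteq> []"
  shows "path_val \<phi> H \<le> \<phi> (hd H)"
  using assms(2)
proof (induction H rule: rev_induct)
  case (snoc x xs)
  show ?case
  proof (cases "xs = []")
    case False
    then obtain ys y where xs: "xs = ys @ [y]" using rev_exhaust by blast
    have "\<phi> x \<le> \<phi> (sup y x)" using \<open>mono \<phi>\<close> by (simp add: monoD)
    then have "path_val \<phi> [y, x] \<le> \<phi> y" by (simp add: path_val_Cons_Cons)
    moreover have "path_val \<phi> (xs @ [x]) = path_val \<phi> xs + path_val \<phi> [y, x] - \<phi> y"
      using path_val_append_split[of \<phi> ys y "[x]"] xs by simp
    ultimately show ?thesis using snoc.IH False by simp
  qed simp
qed simp

lemma path_val_remove_loop: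
  assumes "mono \<phi>"
  shows "path_val \<phi> (xs @ c # ys @ c # zs) \<le> path_val \<phi> (xs @ c # zs)"
proof -
  have "path_val \<phi> ((c # ys) @ [c]) \<le> \<phi> c"
    using path_val_le_last[OF assms, of "(c # ys) @ [c]"] by simp
  then show ?thesis
    using path_val_append_split[of \<phi> xs c "ys @ c # zs"]
      path_val_append_split[of \<phi> "c # ys" c zs] path_val_append_split[of \<phi> xs c zs]
    by simp
qed

lemma walk_dominated_by_path:
  assumes "mono \<phi>" and "H \<noteq> []"
  shows "\<exists>H' \<in> paths (hd H) (last H). path_val \<phi> H \<le> path_val \<phi> H'"
  using assms(2)
proof (induction "length H" arbitrary: H rule: less_induct)
  case less
  show ?case
  proof (cases "distinct H")
    case True
    with less.prems show ?thesis by (auto simp: paths_def)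
  next
    case False
    then obtain xs ys zs c where H: "H = xs @ [c] @ ys @ [c] @ zs"
      using not_distinct_decomp by blast
    let ?K = "xs @ c # zs"
    have "length ?K < length H" using H by simp
    then obtain H' where H': "H' \<in> paths (hd ?K) (last ?K)" "path_val \<phi> ?K \<le> path_val \<phi> H'"
      using less.hyps by blast
    have hd_K: "hd ?K = hd H" using H by (cases xs) simp_all
    have last_K: "last ?K = last H" using H by (cases zs rule: rev_cases) simp_all
    have "path_val \<phi> H \<le> path_val \<phi> ?K"
      using H path_val_remove_loop[OF assms(1)] by simp
    with H'(2) have "path_val \<phi> H \<le> path_val \<phi> H'" by simp
    moreover have "H' \<in> paths (hd H) (last H)" using H'(1) unfolding hd_K last_K .
    ultimately show ?thesis by blast
  qed
qed

lemma finite_paths: "finite (paths a b)"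
proof (rule finite_subset)
  show "paths a b \<subseteq> {xs. set xs \<subseteq> UNIV \<and> distinct xs}" by (auto simp: paths_def)
  show "finite {xs::'a list. set xs \<subseteq> UNIV \<and> distinct xs}"
    by (rule finite_subset_distinct) simp
qed

lemma paths_nonempty: "paths a b \<noteq> {}"
proof (cases "a = b")
  case True
  then have "[a] \<in> paths a b" by (simp add: paths_def)
  then show ?thesis by blast
next
  case False
  then have "[a, b] \<in> paths a b" by (simp add: paths_def)
  then show ?thesis by blast
qed

lemma lam_attained: "\<exists>H \<in> paths a b. lam \<phi> a b = path_val \<phi> H"
proof -
  have "lam \<phi> a b \<in> path_val \<phi> ` paths a b"
    unfolding lam_def using finite_paths paths_nonempty by (intro Max_in) auto
  then show ?thesis by auto
qed

lemma walk_le_lam: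
  assumes "mono \<phi>" and "H \<noteq> []" and "hd H = a" and "last H = b"
  shows "path_val \<phi> H \<le> lam \<phi> a b"
proof -
  obtain H' where "H' \<in> paths a b" "path_val \<phi> H \<le> path_val \<phi> H'"
    using walk_dominated_by_path[OF assms(1,2)] assms(3,4) by auto
  moreover have "path_val \<phi> H' \<le> lam \<phi> a b" if "H' \<in> paths a b" for H'
    unfolding lam_def using finite_paths that by (intro Max_ge) auto
  ultimately show ?thesis by force
qed

lemma lam_le_right: "mono \<phi> \<Longrightarrow> lam \<phi> a b \<le> \<phi> b"
  using lam_attained[of a b \<phi>] path_val_le_last by (fastforce simp: paths_def)

lemma lam_le_left: "mono \<phi> \<Longrightarrow> lam \<phi> a b \<le> \<phi> a"
  using lam_attained[of a b \<phi>] path_val_le_hd by (fastforce simp: paths_def)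

lemma lam_nonneg:
  assumes "\<phi> \<in> M1"
  shows "0 \<le> lam \<phi> a b"
proof -
  have "mono \<phi>" and "0 \<le> \<phi> (inf a b)" using assms by (auto simp: M1_def)
  moreover have "path_val \<phi> [a, inf a b, b] = \<phi> (inf a b)"
    by (simp add: path_val_Cons_Cons sup.absorb1 sup.absorb2)
  ultimately show ?thesis
    using walk_le_lam[of \<phi> "[a, inf a b, b]" a b] by simp
qed

lemma lam_eq_right_if_le:
  assumes "mono \<phi>" and "x \<le> a"
  shows "lam \<phi> a x = \<phi> x"
proof -
  have "path_val \<phi> [a, x] = \<phi> x"
    using assms(2) by (simp add: path_val_Cons_Cons sup.absorb1)
  then have "\<phi> x \<le> lam \<phi> a x" using walk_le_lam[OF assms(1), of "[a, x]" a x] by simp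
  with lam_le_right[OF assms(1)] show ?thesis by (simp add: order_antisym)
qed

lemma Lambda_in_M1:
  assumes "\<phi> \<in> M1"
  shows "Lambda a \<phi> \<in> M1"
proof -
  have m: "mono \<phi>" using assms by (simp add: M1_def)
  have "mono (Lambda a \<phi>)"
  proof (rule monoI)
    fix x y :: 'a
    assume "x \<le> y"
    then have sup_yx: "sup y x = y" by (simp add: sup.absorb1)
    obtain H where H: "H \<in> paths a y" "lam \<phi> a y = path_val \<phi> H"
      using lam_attained by blast
    then have "H \<noteq> []" "last H = y" by (simp_all add: paths_def)
    then obtain G where G: "H = G @ [y]" by (metis append_butlast_last_id)
    have "path_val \<phi> (H @ [x]) = path_val \<phi> H + \<phi> x - \<phi> y"
      using path_val_append_split[of \<phi> G y "[x]"] G sup_yx by (simp add: path_val_Cons_Cons)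
    moreover have "path_val \<phi> (H @ [x]) \<le> lam \<phi> a x"
      using H(1) G by (intro walk_le_lam[OF m]) (auto simp: paths_def hd_append)
    ultimately show "Lambda a \<phi> x \<le> Lambda a \<phi> y"
      using H(2) by (simp add: Lambda_def)
  qed
  moreover have "0 \<le> Lambda a \<phi> x" for x
    using lam_le_right[OF m] by (simp add: Lambda_def)
  ultimately show ?thesis by (simp add: M1_def)
qed

lemma Lambda_eq_0_if_le: "mono \<phi> \<Longrightarrow> x \<le> a \<Longrightarrow> Lambda a \<phi> x = 0"
  by (simp add: Lambda_def lam_eq_right_if_le)

lemma Lambda_eq_0_if_zero: "\<phi> \<in> M1 \<Longrightarrow> \<phi> x = 0 \<Longrightarrow> Lambda a \<phi> x = 0"
  using lam_nonneg[of \<phi> a x] lam_le_right[of \<phi> a x] by (simp add: Lambda_def M1_def)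

lemma Lambda_eq_self_if_zero:
  assumes "\<phi> \<in> M1" and "\<phi> c = 0"
  shows "Lambda c \<phi> = \<phi>"
proof -
  have "lam \<phi> c x = 0" for x
    using lam_le_left[of \<phi> c x] lam_nonneg[OF assms(1), of c x] assms by (simp add: M1_def)
  then show ?thesis by (simp add: Lambda_def)
qed

lemma fold_Lambda_in_M1: "\<phi> \<in> M1 \<Longrightarrow> fold Lambda as \<phi> \<in> M1"
  by (induction as arbitrary: \<phi>) (simp_all add: Lambda_in_M1)

lemma fold_Lambda_eq_0_if_zero: "\<phi> \<in> M1 \<Longrightarrow> \<phi> x = 0 \<Longrightarrow> fold Lambda as \<phi> x = 0"
  by (induction as arbitrary: \<phi>) (simp_all add: Lambda_in_M1 Lambda_eq_0_if_zero)

lemma fold_Lambda_eq_0_if_le_member: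
  assumes "\<phi> \<in> M1" and "b \<in> set as" and "x \<le> b"
  shows "fold Lambda as \<phi> x = 0"
  using assms
proof (induction as arbitrary: \<phi>)
  case (Cons a as)
  have M: "Lambda a \<phi> \<in> M1" using Cons.prems(1) by (rule Lambda_in_M1)
  show ?case
  proof (cases "b = a")
    case True
    then have "Lambda a \<phi> x = 0"
      using Cons.prems by (intro Lambda_eq_0_if_le) (simp_all add: M1_def)
    with M show ?thesis by (simp add: fold_Lambda_eq_0_if_zero)
  next
    case False
    then show ?thesis using Cons.IH[OF M] Cons.prems by simp
  qed
qed simp

theorem lemma3p14:
  fixes \<phi> :: "'a::{finite,lattice} \<Rightarrow> real" and as :: "'a list"
  assumes "\<phi> \<in> M1"
    and "length as \<ge> 2"
    and "\<exists>i < length as - 1. as ! (length as - 1) \<le> as ! i"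
  shows "Lambdas as \<phi> = Lambdas (butlast as) \<phi>"
proof -
  have "as \<noteq> []" using assms(2) by auto
  then obtain pre c where as: "as = pre @ [c]" using rev_exhaust by blast
  obtain i where "i < length pre" "c \<le> pre ! i"
    using assms(3) as by (auto simp: nth_append)
  then have "fold Lambda pre \<phi> c = 0"
    by (intro fold_Lambda_eq_0_if_le_member[OF assms(1), of "pre ! i"]) simp_all
  then have "Lambda c (fold Lambda pre \<phi>) = fold Lambda pre \<phi>"
    by (intro Lambda_eq_self_if_zero fold_Lambda_in_M1 assms(1))
  then show ?thesis using as by (simp add: Lambdas_def)
qed

end
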